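(* Let $D\subset\mathbb R^3$ be an arbitrary nonempty bounded open set and $B,B'$ open balls with $[\overline B\cup\overline{B'}]\cap\overline D=\emptyset$. Then there exist positive constants $C,\tau_0$, independent of $\tau$, such that for all $\tau\ge\tau_0$, $J(\tau;f,g)>0$ and $$J(\tau;f,g)\ge C\tau^2\int_Ddx\int_{B\times B'}e^{-\tau\phi(x;y,y')}\,dy\,dy'.$$
   Context: $f=\chi_B$, $g=\chi_{B'}$; for $h\in L^2$, $v_h(x)=\frac1{4\pi}\int\frac{e^{-\tau|x-y|}}{|x-y|}h(y)dy$; $J(\tau;f,g)=\int_D(\nabla v_f\cdot\nabla v_g+\tau^2v_fv_g)dx$; $\phi(x;y,y')=|y-x|+|x-y'|$; $[F]$ is the convex hull of $F$. *)

theory Defs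
  imports "HOL-Analysis.Analysis"
begin

definition vpot :: "real \<Rightarrow> (real^3 \<Rightarrow> real) \<Rightarrow> real^3 \<Rightarrow> real" where
  "vpot \<tau> h x = (1 / (4 * pi)) *
     (LINT y|lborel. exp (- \<tau> * dist x y) / dist x y * h y)"

definition grad :: "(real^3 \<Rightarrow> real) \<Rightarrow> real^3 \<Rightarrow> real^3" where
  "grad v x = (\<chi> i. frechet_derivative v (at x) (axis i 1))"

definition Jfun :: "real \<Rightarrow> (real^3) set \<Rightarrow> (real^3 \<Rightarrow> real) \<Rightarrow> (real^3 \<Rightarrow> real) \<Rightarrow> real" where
  "Jfun \<tau> D f g = (LINT x:D|lborel.
      grad (vpot \<tau> f) x \<bullet> grad (vpot \<tau> g) x + \<tau>\<^sup>2 * vpot \<tau> f x * vpot \<tau> g x)"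

definition phi :: "real^3 \<Rightarrow> real^3 \<Rightarrow> real^3 \<Rightarrow> real" where
  "phi x y y' = dist y x + dist x y'"

end

theory Submission
  imports Defs
begin

text \<open>
  Outside the closed balls the potentials are smooth and can be differentiated under the
  integral sign, so the integrand of J at x equals (4 pi)^-2 times the double integral over
  B x B' of E = grad K(x,y) . grad K(x,y') + tau^2 K(x,y) K(x,y'), where K is the Yukawa kernel
  e^(-tau r)/r.  Writing u = |x - y|, u' = |x - y'| and theta for the angle at x between y
  and y', one has E = e^(-tau phi)/(u u') ((tau + 1/u)(tau + 1/u') cos theta + tau^2).
  Since x stays away from the convex hull of the balls, compactness gives uniform bounds
  d0 <= u, u' <= R and cos theta >= delta - 1 with delta > 0.  Once tau >= 4/(delta d0) the
  factors tau + 1/u exceed tau by at most a fraction delta/4, so the bracket is at least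
  delta tau^2/4, and E >= delta tau^2 e^(-tau phi)/(4 R^2).  Integrating gives the bound,
  whose right-hand side is positive.
\<close>

section \<open>Integrals of continuous functions\<close>

lemma continuous_on_slice:
  assumes "continuous_on (T \<times> S) (\<lambda>(t, s). f t s)" and "t \<in> T"
  shows "continuous_on S (f t)"
proof -
  have "continuous_on S (\<lambda>s. (t, s))" by (intro continuous_intros)
  moreover have "(\<lambda>s. (t, s)) ` S \<subseteq> T \<times> S" using assms(2) by auto
  ultimately show ?thesis using continuous_on_compose2[OF assms(1)] by fastforce
qed

lemma set_integrable_continuous_on:
  fixes f :: "'a::euclidean_space \<Rightarrow> real"
  assumes "compact S" "continuous_on S f" "A \<subseteq> S" "A \<in> sets lborel"
  shows "set_integrable lborel A f"
proof -
  have "set_integrable lborel S f"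
    using borel_integrable_compact[OF assms(1,2)] unfolding set_integrable_def by simp
  then show ?thesis using set_integrable_subset assms(3,4) by blast
qed

lemma set_integral_diff_le:
  fixes f g :: "'a \<Rightarrow> real"
  assumes f: "set_integrable M A f" and g: "set_integrable M A g"
    and A: "A \<in> sets M" "emeasure M A \<noteq> \<infinity>" and e: "\<And>x. x \<in> A \<Longrightarrow> \<bar>f x - g x\<bar> \<le> e"
  shows "\<bar>(LINT x:A|M. f x) - (LINT x:A|M. g x)\<bar> \<le> measure M A * e"
proof -
  have fg: "set_integrable M A (\<lambda>x. f x - g x)"
    using f g by (rule set_integral_diff(1))
  have "\<bar>(LINT x:A|M. f x) - (LINT x:A|M. g x)\<bar> = \<bar>LINT x:A|M. f x - g x\<bar>"
    using f g by (simp add: set_integral_diff)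
  also have "\<dots> \<le> (LINT x:A|M. \<bar>f x - g x\<bar>)"
    using set_integral_norm_bound[OF fg] by simp
  also have "\<dots> \<le> (LINT x:A|M. e)"
    using fg A e by (intro set_integral_mono set_integrable_abs) (auto simp: set_integrable_def less_top)
  also have "\<dots> = measure M A * e"
    using A by (simp add: set_integral_const)
  finally show ?thesis .
qed

lemma set_integral_diff3_le:
  fixes f g h :: "'a \<Rightarrow> real"
  assumes f: "set_integrable M A f" and g: "set_integrable M A g" and h: "set_integrable M A h"
    and A: "A \<in> sets M" "emeasure M A \<noteq> \<infinity>" and e: "\<And>x. x \<in> A \<Longrightarrow> \<bar>f x - g x - h x\<bar> \<le> e"
  shows "\<bar>(LINT x:A|M. f x) - (LINT x:A|M. g x) - (LINT x:A|M. h x)\<bar> \<le> measure M A * e"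
proof -
  have "\<bar>(LINT x:A|M. f x - h x) - (LINT x:A|M. g x)\<bar> \<le> measure M A * e"
    using e by (intro set_integral_diff_le set_integral_diff(1) f g h A) (simp add: algebra_simps)
  moreover have "(LINT x:A|M. f x - h x) = (LINT x:A|M. f x) - (LINT x:A|M. h x)"
    using f h by (rule set_integral_diff(2))
  ultimately show ?thesis by (simp add: algebra_simps)
qed

lemma uniformly_continuous_in_parameter:
  fixes G :: "'a::metric_space \<Rightarrow> 'b::metric_space \<Rightarrow> 'c::metric_space"
  assumes "compact K" "compact S" "continuous_on (K \<times> S) (\<lambda>(t, s). G t s)" "t0 \<in> K" "e > 0"
  obtains d where "d > 0" "\<And>t s. t \<in> K \<Longrightarrow> s \<in> S \<Longrightarrow> dist t t0 < d \<Longrightarrow> dist (G t s) (G t0 s) < e"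
proof -
  obtain d where "d > 0" and d: "\<And>p p'. p \<in> K \<times> S \<Longrightarrow> p' \<in> K \<times> S \<Longrightarrow> dist p' p < d \<Longrightarrow>
      dist ((\<lambda>(t, s). G t s) p') ((\<lambda>(t, s). G t s) p) < e"
    using compact_uniformly_continuous[OF assms(3) compact_Times[OF assms(1,2)]] assms(5)
    unfolding uniformly_continuous_on_def by metis
  show thesis
    by (rule that[OF \<open>d > 0\<close>]) (use d[of "(t0, s)" "(t, s)" for t s] assms(4) in \<open>auto simp: dist_Pair_Pair\<close>)
qed

lemma continuous_on_set_integral_param:
  fixes f :: "'a::metric_space \<Rightarrow> 'b::euclidean_space \<Rightarrow> real"
  assumes T: "compact T" and S: "compact S" and f: "continuous_on (T \<times> S) (\<lambda>(t, s). f t s)"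
    and A: "A \<subseteq> S" "A \<in> sets lborel"
  shows "continuous_on T (\<lambda>t. LINT s:A|lborel. f t s)"
  unfolding continuous_on_iff
proof (intro ballI allI impI)
  fix t e assume t: "t \<in> T" and "(0::real) < e"
  define m where "m = measure lborel A"
  have "m \<ge> 0" unfolding m_def by simp
  have fin: "emeasure lborel A \<noteq> \<infinity>"
    using emeasure_bounded_finite[of A] bounded_subset[OF compact_imp_bounded[OF S] A(1)] by auto
  have int: "set_integrable lborel A (f t)" if "t \<in> T" for t
    using set_integrable_continuous_on[OF S continuous_on_slice[OF f that] A] .
  obtain d where "d > 0" and d: "\<And>t' s. t' \<in> T \<Longrightarrow> s \<in> S \<Longrightarrow> dist t' t < d \<Longrightarrow>
      dist (f t' s) (f t s) < e / (m + 1)"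
    using uniformly_continuous_in_parameter[OF T S f t] \<open>e > 0\<close> \<open>m \<ge> 0\<close>
    by (metis add_nonneg_pos divide_pos_pos zero_less_one)
  show "\<exists>d>0. \<forall>t'\<in>T. dist t' t < d \<longrightarrow> dist (LINT s:A|lborel. f t' s) (LINT s:A|lborel. f t s) < e"
  proof (intro exI[of _ d] conjI ballI impI \<open>d > 0\<close>)
    fix t' assume t': "t' \<in> T" "dist t' t < d"
    have "\<bar>f t' s - f t s\<bar> \<le> e / (m + 1)" if "s \<in> A" for s
      using d[OF t'(1) _ t'(2), of s] that A by (auto simp: dist_real_def)
    then have "\<bar>(LINT s:A|lborel. f t' s) - (LINT s:A|lborel. f t s)\<bar> \<le> m * (e / (m + 1))"
      unfolding m_def using int t t' A fin by (intro set_integral_diff_le) auto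
    also have "\<dots> < e" using \<open>e > 0\<close> \<open>m \<ge> 0\<close> by (simp add: field_simps)
    finally show "dist (LINT s:A|lborel. f t' s) (LINT s:A|lborel. f t s) < e"
      by (simp add: dist_real_def)
  qed
qed

lemma inner_linearization_bound:
  fixes f :: "'a::euclidean_space \<Rightarrow> real"
  assumes x: "x \<in> ball x0 d"
    and f: "\<And>z. z \<in> ball x0 d \<Longrightarrow> (f has_derivative (\<lambda>h. g z \<bullet> h)) (at z)"
    and g: "\<And>z. z \<in> ball x0 d \<Longrightarrow> norm (g z - g x0) \<le> e"
  shows "\<bar>f x - f x0 - g x0 \<bullet> (x - x0)\<bar> \<le> norm (x - x0) * e"
proof -
  have "norm (f x - f x0 - (\<lambda>h. g x0 \<bullet> h) (x - x0)) \<le> norm (x - x0) * e"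
  proof (rule differentiable_bound_linearization[where S = "ball x0 d" and f' = "\<lambda>z h. g z \<bullet> h"])
    show "x0 + t *\<^sub>R (x - x0) \<in> ball x0 d" if "t \<in> {0..1}" for t
    proof -
      have "t * norm (x - x0) \<le> norm (x - x0)" using that by (simp add: mult_left_le_one_le)
      then show ?thesis using x that by (simp add: dist_norm norm_minus_commute)
    qed
    show "(f has_derivative (\<lambda>h. g z \<bullet> h)) (at z within ball x0 d)" if "z \<in> ball x0 d" for z
      using f[OF that] by (rule has_derivative_at_withinI)
    show "onorm ((\<lambda>h. g z \<bullet> h) - (\<lambda>h. g x0 \<bullet> h)) \<le> e" if "z \<in> ball x0 d" for z
    proof (rule onorm_le)
      fix h
      have "\<bar>(g z - g x0) \<bullet> h\<bar> \<le> norm (g z - g x0) * norm h" by (rule Cauchy_Schwarz_ineq2)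
      also have "\<dots> \<le> e * norm h" using g[OF that] by (simp add: mult_right_mono)
      finally show "norm (((\<lambda>h. g z \<bullet> h) - (\<lambda>h. g x0 \<bullet> h)) h) \<le> e * norm h"
        by (simp add: inner_diff_left)
    qed
  qed (use x in \<open>auto intro: le_less_trans[OF zero_le_dist]\<close>)
  then show ?thesis by simp
qed

lemma bounded_linear_set_integral_inner:
  fixes G :: "'b \<Rightarrow> 'a::euclidean_space"
  assumes "\<And>h. set_integrable M A (\<lambda>y. G y \<bullet> h)"
  shows "bounded_linear (\<lambda>h. LINT y:A|M. G y \<bullet> h)"
proof -
  have "linear (\<lambda>h. LINT y:A|M. G y \<bullet> h)"
    by (rule linearI) (use assms in \<open>simp_all add: inner_add_right set_integral_add\<close>)
  then show ?thesis by (simp only: linear_conv_bounded_linear)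
qed

lemma uniform_linearization_in_parameter:
  fixes F :: "'a::euclidean_space \<Rightarrow> 'b::metric_space \<Rightarrow> real" and G :: "'a \<Rightarrow> 'b \<Rightarrow> 'a"
  assumes S: "compact S" and U: "open U" "x0 \<in> U"
    and F: "\<And>x y. x \<in> U \<Longrightarrow> y \<in> S \<Longrightarrow> ((\<lambda>x. F x y) has_derivative (\<lambda>h. G x y \<bullet> h)) (at x)"
    and G: "continuous_on (U \<times> S) (\<lambda>(x, y). G x y)" and "e > 0"
  obtains d where "d > 0" "ball x0 d \<subseteq> U"
    "\<And>x y. x \<in> ball x0 d \<Longrightarrow> y \<in> S \<Longrightarrow> \<bar>F x y - F x0 y - G x0 y \<bullet> (x - x0)\<bar> \<le> norm (x - x0) * e"
proof -
  obtain \<delta> where "\<delta> > 0" and \<delta>: "cball x0 \<delta> \<subseteq> U"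
    using U open_contains_cball by blast
  have "continuous_on (cball x0 \<delta> \<times> S) (\<lambda>(x, y). G x y)"
    using \<delta> by (intro continuous_on_subset[OF G]) auto
  moreover have "x0 \<in> cball x0 \<delta>" using \<open>\<delta> > 0\<close> by simp
  ultimately obtain d1 where "d1 > 0" and d1: "\<And>z y. z \<in> cball x0 \<delta> \<Longrightarrow> y \<in> S \<Longrightarrow>
      dist z x0 < d1 \<Longrightarrow> dist (G z y) (G x0 y) < e"
    using uniformly_continuous_in_parameter[OF compact_cball S _ _ \<open>e > 0\<close>] by blast
  define d where "d = min \<delta> d1"
  have ball: "ball x0 d \<subseteq> U" using \<delta> by (auto simp: d_def)
  show thesis
  proof (rule that[of d])
    show "d > 0" using \<open>\<delta> > 0\<close> \<open>d1 > 0\<close> by (simp add: d_def)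
    show "ball x0 d \<subseteq> U" by (rule ball)
    fix x y assume x: "x \<in> ball x0 d" and "y \<in> S"
    show "\<bar>F x y - F x0 y - G x0 y \<bullet> (x - x0)\<bar> \<le> norm (x - x0) * e"
    proof (rule inner_linearization_bound[OF x])
      show "((\<lambda>x. F x y) has_derivative (\<lambda>h. G z y \<bullet> h)) (at z)" if "z \<in> ball x0 d" for z
        using F ball that \<open>y \<in> S\<close> by blast
      show "norm (G z y - G x0 y) \<le> e" if "z \<in> ball x0 d" for z
        using d1[of z y] that \<open>y \<in> S\<close> by (auto simp: d_def dist_commute dist_norm norm_minus_commute)
    qed
  qed
qed

lemma has_derivative_set_integral_param:
  fixes F :: "'a::euclidean_space \<Rightarrow> 'b::euclidean_space \<Rightarrow> real"
    and G :: "'a \<Rightarrow> 'b \<Rightarrow> 'a"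
  assumes S: "compact S" and A: "A \<subseteq> S" "A \<in> sets lborel" and U: "open U" "x0 \<in> U"
    and F: "\<And>x y. x \<in> U \<Longrightarrow> y \<in> S \<Longrightarrow> ((\<lambda>x. F x y) has_derivative (\<lambda>h. G x y \<bullet> h)) (at x)"
    and G: "continuous_on (U \<times> S) (\<lambda>(x, y). G x y)"
    and F_cont: "\<And>x. x \<in> U \<Longrightarrow> continuous_on S (F x)"
  shows "((\<lambda>x. LINT y:A|lborel. F x y) has_derivative (\<lambda>h. LINT y:A|lborel. G x0 y \<bullet> h)) (at x0)"
  unfolding has_derivative_at_alt
proof (intro conjI allI impI)
  have int_F: "set_integrable lborel A (F x)" if "x \<in> U" for x
    using set_integrable_continuous_on[OF S F_cont[OF that] A] .
  have int_G: "set_integrable lborel A (\<lambda>y. G x y \<bullet> h)" if "x \<in> U" for x h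
    by (rule set_integrable_continuous_on[OF S _ A])
       (use continuous_on_slice[OF G that] in \<open>intro continuous_intros\<close>)
  show "bounded_linear (\<lambda>h. LINT y:A|lborel. G x0 y \<bullet> h)"
    using int_G[OF U(2)] by (rule bounded_linear_set_integral_inner)
  fix e :: real assume "e > 0"
  define m where "m = measure lborel A"
  have "m \<ge> 0" unfolding m_def by simp
  have fin: "emeasure lborel A \<noteq> \<infinity>"
    using emeasure_bounded_finite[of A] bounded_subset[OF compact_imp_bounded[OF S] A(1)] by auto
  obtain d where "d > 0" and ball: "ball x0 d \<subseteq> U" and d: "\<And>x y. x \<in> ball x0 d \<Longrightarrow> y \<in> S \<Longrightarrow>
      \<bar>F x y - F x0 y - G x0 y \<bullet> (x - x0)\<bar> \<le> norm (x - x0) * (e / (m + 1))"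
    using uniform_linearization_in_parameter[OF S U F G, of "e / (m + 1)"] \<open>e > 0\<close> \<open>m \<ge> 0\<close> by auto
  show "\<exists>d>0. \<forall>x. norm (x - x0) < d \<longrightarrow>
      norm ((LINT y:A|lborel. F x y) - (LINT y:A|lborel. F x0 y) - (LINT y:A|lborel. G x0 y \<bullet> (x - x0)))
        \<le> e * norm (x - x0)"
  proof (intro exI[of _ d] conjI allI impI \<open>d > 0\<close>)
    fix x assume "norm (x - x0) < d"
    then have x: "x \<in> ball x0 d" "x \<in> U" using ball by (auto simp: dist_norm norm_minus_commute)
    have "\<bar>(LINT y:A|lborel. F x y) - (LINT y:A|lborel. F x0 y) - (LINT y:A|lborel. G x0 y \<bullet> (x - x0))\<bar>
        \<le> measure lborel A * (norm (x - x0) * (e / (m + 1)))"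
      by (intro set_integral_diff3_le int_F int_G x U(2) A(2) fin) (use d[OF x(1)] A(1) in blast)
    also have "\<dots> = m * (norm (x - x0) * (e / (m + 1)))" by (simp add: m_def)
    also have "\<dots> \<le> e * norm (x - x0)"
      using \<open>e > 0\<close> \<open>m \<ge> 0\<close> by (simp add: field_simps mult_left_mono)
    finally show "norm ((LINT y:A|lborel. F x y) - (LINT y:A|lborel. F x0 y)
        - (LINT y:A|lborel. G x0 y \<bullet> (x - x0))) \<le> e * norm (x - x0)"
      by simp
  qed
qed

lemma set_integral_pos_open:
  fixes f :: "'a::euclidean_space \<Rightarrow> real"
  assumes A: "open A" "A \<noteq> {}" and pos: "\<And>x. x \<in> A \<Longrightarrow> f x > 0"
    and int: "set_integrable lborel A f"
  shows "(LINT x:A|lborel. f x) > 0"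
proof -
  have "emeasure lborel A \<noteq> 0"
  proof -
    obtain c e where "e > 0" "ball c e \<subseteq> A"
      using A open_contains_ball by blast
    then have "emeasure lborel (ball c e) \<le> emeasure lborel A"
      using A(1) by (intro emeasure_mono) auto
    moreover have "emeasure lborel (ball c e) > 0"
      using \<open>e > 0\<close> emeasure_lborel_ball_finite[of c e] content_ball_pos[of e c]
      by (simp add: emeasure_eq_ennreal_measure)
    ultimately show ?thesis by auto
  qed
  then have "\<not> (AE x in lborel. x \<notin> A)"
    using A(1) by (subst AE_iff_measurable[of A]) auto
  moreover have "(AE x in lborel. indicator A x * f x = 0) \<Longrightarrow> (AE x in lborel. x \<notin> A)"
    by (erule eventually_mono) (use pos in \<open>fastforce split: split_indicator\<close>)
  moreover have nonneg: "0 \<le> indicator A x * f x" for x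
    using pos by (auto split: split_indicator intro: less_imp_le)
  ultimately have "(LINT x|lborel. indicator A x * f x) \<noteq> 0"
    using int unfolding set_integrable_def by (subst integral_nonneg_eq_0_iff_AE) auto
  moreover have "(LINT x|lborel. indicator A x * f x) \<ge> 0"
    using nonneg by (rule Bochner_Integration.integral_nonneg)
  ultimately show ?thesis
    unfolding set_lebesgue_integral_def by simp
qed

lemma nested_set_integral_continuous:
  fixes f :: "'a::metric_space \<Rightarrow> 'b::euclidean_space \<Rightarrow> 'c::euclidean_space \<Rightarrow> real"
  assumes T: "compact T" and S1: "compact S1" and S2: "compact S2"
    and A1: "A1 \<subseteq> S1" "A1 \<in> sets lborel" and A2: "A2 \<subseteq> S2" "A2 \<in> sets lborel"
    and f: "continuous_on ((T \<times> S1) \<times> S2) (\<lambda>((x, y), y'). f x y y')"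
  shows "\<And>x y. x \<in> T \<Longrightarrow> y \<in> S1 \<Longrightarrow> set_integrable lborel A2 (f x y)"
    and "\<And>x. x \<in> T \<Longrightarrow> set_integrable lborel A1 (\<lambda>y. LINT y':A2|lborel. f x y y')"
    and "continuous_on T (\<lambda>x. LINT y:A1|lborel. LINT y':A2|lborel. f x y y')"
proof -
  have f': "continuous_on ((T \<times> S1) \<times> S2) (\<lambda>(p, y'). (\<lambda>(x, y). f x y y') p)"
    using f by (simp add: case_prod_beta)
  show "set_integrable lborel A2 (f x y)" if "x \<in> T" "y \<in> S1" for x y
    using set_integrable_continuous_on[OF S2 continuous_on_slice[OF f', of "(x, y)"] A2] that by simp
  have "continuous_on (T \<times> S1) (\<lambda>p. LINT y':A2|lborel. (\<lambda>(x, y). f x y y') p)"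
    by (rule continuous_on_set_integral_param[OF compact_Times[OF T S1] S2 f' A2])
  then have inner: "continuous_on (T \<times> S1) (\<lambda>(x, y). LINT y':A2|lborel. f x y y')"
    by (simp add: case_prod_beta)
  show "set_integrable lborel A1 (\<lambda>y. LINT y':A2|lborel. f x y y')" if "x \<in> T" for x
    using set_integrable_continuous_on[OF S1 continuous_on_slice[OF inner that] A1] .
  show "continuous_on T (\<lambda>x. LINT y:A1|lborel. LINT y':A2|lborel. f x y y')"
    by (rule continuous_on_set_integral_param[OF T S1 inner A1])
qed

lemma nested_set_integral_mono:
  fixes f g :: "'a::euclidean_space \<Rightarrow> 'b::euclidean_space \<Rightarrow> 'c::euclidean_space \<Rightarrow> real"
  assumes T: "compact T" and S1: "compact S1" and S2: "compact S2"
    and A: "A \<subseteq> T" "A \<in> sets lborel"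
    and A1: "A1 \<subseteq> S1" "A1 \<in> sets lborel" and A2: "A2 \<subseteq> S2" "A2 \<in> sets lborel"
    and f: "continuous_on ((T \<times> S1) \<times> S2) (\<lambda>((x, y), y'). f x y y')"
    and g: "continuous_on ((T \<times> S1) \<times> S2) (\<lambda>((x, y), y'). g x y y')"
    and le: "\<And>x y y'. x \<in> A \<Longrightarrow> y \<in> A1 \<Longrightarrow> y' \<in> A2 \<Longrightarrow> f x y y' \<le> g x y y'"
  shows "(LINT x:A|lborel. LINT y:A1|lborel. LINT y':A2|lborel. f x y y')
    \<le> (LINT x:A|lborel. LINT y:A1|lborel. LINT y':A2|lborel. g x y y')"
proof (rule set_integral_mono)
  note F = nested_set_integral_continuous[OF T S1 S2 A1 A2 f]
  note G = nested_set_integral_continuous[OF T S1 S2 A1 A2 g]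
  show "set_integrable lborel A (\<lambda>x. LINT y:A1|lborel. LINT y':A2|lborel. f x y y')"
    by (rule set_integrable_continuous_on[OF T F(3) A])
  show "set_integrable lborel A (\<lambda>x. LINT y:A1|lborel. LINT y':A2|lborel. g x y y')"
    by (rule set_integrable_continuous_on[OF T G(3) A])
  fix x assume x: "x \<in> A"
  then have "x \<in> T" using A by auto
  show "(LINT y:A1|lborel. LINT y':A2|lborel. f x y y') \<le> (LINT y:A1|lborel. LINT y':A2|lborel. g x y y')"
  proof (rule set_integral_mono)
    show "set_integrable lborel A1 (\<lambda>y. LINT y':A2|lborel. f x y y')"
      using F(2)[OF \<open>x \<in> T\<close>] .
    show "set_integrable lborel A1 (\<lambda>y. LINT y':A2|lborel. g x y y')"
      using G(2)[OF \<open>x \<in> T\<close>] .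
    fix y assume y: "y \<in> A1"
    then have "y \<in> S1" using A1 by auto
    show "(LINT y':A2|lborel. f x y y') \<le> (LINT y':A2|lborel. g x y y')"
      using F(1) G(1) \<open>x \<in> T\<close> \<open>y \<in> S1\<close> x y le by (intro set_integral_mono) auto
  qed
qed

lemma nested_set_integral_pos:
  fixes f :: "'a::euclidean_space \<Rightarrow> 'b::euclidean_space \<Rightarrow> 'c::euclidean_space \<Rightarrow> real"
  assumes T: "compact T" and S1: "compact S1" and S2: "compact S2"
    and A: "A \<subseteq> T" "open A" "A \<noteq> {}" and A1: "A1 \<subseteq> S1" "open A1" "A1 \<noteq> {}"
    and A2: "A2 \<subseteq> S2" "open A2" "A2 \<noteq> {}"
    and f: "continuous_on ((T \<times> S1) \<times> S2) (\<lambda>((x, y), y'). f x y y')"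
    and pos: "\<And>x y y'. x \<in> A \<Longrightarrow> y \<in> A1 \<Longrightarrow> y' \<in> A2 \<Longrightarrow> f x y y' > 0"
  shows "(LINT x:A|lborel. LINT y:A1|lborel. LINT y':A2|lborel. f x y y') > 0"
proof -
  have "A1 \<in> sets lborel" "A2 \<in> sets lborel" using A1 A2 by simp_all
  note F = nested_set_integral_continuous[OF T S1 S2 A1(1) this(1) A2(1) this(2) f]
  show ?thesis
  proof (rule set_integral_pos_open[OF A(2,3)])
    show "set_integrable lborel A (\<lambda>x. LINT y:A1|lborel. LINT y':A2|lborel. f x y y')"
      using A by (intro set_integrable_continuous_on[OF T F(3)]) (auto simp: A1 A2)
    fix x assume x: "x \<in> A"
    show "(LINT y:A1|lborel. LINT y':A2|lborel. f x y y') > 0"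
    proof (rule set_integral_pos_open[OF A1(2,3)])
      show "set_integrable lborel A1 (\<lambda>y. LINT y':A2|lborel. f x y y')"
        using F(2) x A by blast
      show "(LINT y':A2|lborel. f x y y') > 0" if "y \<in> A1" for y
      proof -
        have "x \<in> T" "y \<in> S1" using x that A A1 by auto
        then show ?thesis using F(1) x that A2 pos by (intro set_integral_pos_open) auto
      qed
    qed
  qed
qed

lemma set_integral_sum:
  fixes f :: "'i \<Rightarrow> 'a \<Rightarrow> real"
  assumes "\<And>i. i \<in> I \<Longrightarrow> set_integrable M A (f i)"
  shows "(LINT x:A|M. \<Sum>i\<in>I. f i x) = (\<Sum>i\<in>I. LINT x:A|M. f i x)"
  unfolding set_lebesgue_integral_def scaleR_sum_right
  by (rule Bochner_Integration.integral_sum[where f = "\<lambda>i x. indicator A x *\<^sub>R f i x"])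
    (use assms in \<open>simp add: set_integrable_def\<close>)

lemma nested_set_integral_separable:
  fixes a b :: "'i \<Rightarrow> 'a \<Rightarrow> real"
  assumes a: "\<And>i. i \<in> I \<Longrightarrow> set_integrable M A (a i)"
    and b: "\<And>i. i \<in> I \<Longrightarrow> set_integrable M A' (b i)"
  shows "(LINT y:A|M. LINT y':A'|M. \<Sum>i\<in>I. a i y * b i y')
    = (\<Sum>i\<in>I. (LINT y:A|M. a i y) * (LINT y':A'|M. b i y'))"
proof -
  have "(LINT y':A'|M. \<Sum>i\<in>I. a i y * b i y') = (\<Sum>i\<in>I. a i y * (LINT y':A'|M. b i y'))" for y
    using b by (simp add: set_integral_sum set_integrable_mult_right)
  then show ?thesis
    using a by (simp add: set_integral_sum set_integrable_mult_left)
qed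

section \<open>The Yukawa kernel\<close>

definition yukawa :: "real \<Rightarrow> 'a::real_normed_vector \<Rightarrow> 'a \<Rightarrow> real" where
  "yukawa \<tau> x y = exp (- \<tau> * dist x y) / dist x y"

definition yukawa_grad :: "real \<Rightarrow> 'a::real_normed_vector \<Rightarrow> 'a \<Rightarrow> 'a" where
  "yukawa_grad \<tau> x y = (- (\<tau> * dist x y + 1) * exp (- \<tau> * dist x y) / dist x y ^ 3) *\<^sub>R (x - y)"

definition yukawa_energy :: "real \<Rightarrow> 'a::real_inner \<Rightarrow> 'a \<Rightarrow> 'a \<Rightarrow> real" where
  "yukawa_energy \<tau> x y y' = yukawa_grad \<tau> x y \<bullet> yukawa_grad \<tau> x y' + \<tau>\<^sup>2 * yukawa \<tau> x y * yukawa \<tau> x y'"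

lemma has_derivative_yukawa:
  fixes x y :: "'a::real_inner"
  assumes "x \<noteq> y"
  shows "((\<lambda>x. yukawa \<tau> x y) has_derivative (\<lambda>h. yukawa_grad \<tau> x y \<bullet> h)) (at x)"
proof -
  define s where "s = norm (x - y)"
  have "s > 0" using assms by (simp add: s_def)
  have norm: "((\<lambda>x. norm (x - y)) has_derivative (\<lambda>h. sgn (x - y) \<bullet> h)) (at x)"
    using has_derivative_compose[OF has_derivative_diff[OF has_derivative_ident has_derivative_const]
        has_derivative_norm[of "x - y"]] assms
    by (simp add: o_def inner_commute)
  define D where "D = - (\<tau> * s + 1) * exp (- \<tau> * s) / s\<^sup>2"
  have "((\<lambda>t. exp (- \<tau> * t) / t) has_real_derivative D) (at s)"
    unfolding D_def using \<open>s > 0\<close>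
    by (auto intro!: derivative_eq_intros simp: power2_eq_square field_simps)
  from has_derivative_compose[OF norm has_field_derivative_imp_has_derivative[OF this[unfolded s_def]]]
  have "((\<lambda>x. yukawa \<tau> x y) has_derivative (\<lambda>h. D * (sgn (x - y) \<bullet> h))) (at x)"
    by (simp add: o_def s_def yukawa_def dist_norm)
  moreover have "D * (sgn (x - y) \<bullet> h) = yukawa_grad \<tau> x y \<bullet> h" for h
    using \<open>s > 0\<close> unfolding D_def yukawa_grad_def sgn_div_norm inner_scaleR_left
    by (simp add: s_def dist_norm power2_eq_square power3_eq_cube field_simps)
  ultimately show ?thesis by simp
qed

lemma continuous_on_yukawa:
  assumes "continuous_on T f" "continuous_on T g" "\<And>p. p \<in> T \<Longrightarrow> f p \<noteq> g p"
  shows "continuous_on T (\<lambda>p. yukawa \<tau> (f p) (g p))"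
  unfolding yukawa_def using assms by (intro continuous_intros) auto

lemma continuous_on_yukawa_grad:
  assumes "continuous_on T f" "continuous_on T g" "\<And>p. p \<in> T \<Longrightarrow> f p \<noteq> g p"
  shows "continuous_on T (\<lambda>p. yukawa_grad \<tau> (f p) (g p))"
  unfolding yukawa_grad_def using assms by (intro continuous_intros) auto

lemma continuous_on_yukawa_energy:
  assumes "continuous_on T x" "continuous_on T y" "continuous_on T y'"
    and "\<And>p. p \<in> T \<Longrightarrow> x p \<noteq> y p" "\<And>p. p \<in> T \<Longrightarrow> x p \<noteq> y' p"
  shows "continuous_on T (\<lambda>p. yukawa_energy \<tau> (x p) (y p) (y' p))"
  unfolding yukawa_energy_def using assms
  by (intro continuous_intros continuous_on_yukawa continuous_on_yukawa_grad) auto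

lemma vpot_indicator:
  "vpot \<tau> (indicator A) x = 1 / (4 * pi) * (LINT y:A|lborel. yukawa \<tau> x y)"
  unfolding vpot_def set_lebesgue_integral_def yukawa_def
  by (intro arg_cong2[where f = "(*)"] refl Bochner_Integration.integral_cong) auto

lemma grad_vpot_indicator_ball:
  assumes "x \<notin> cball b r"
  shows "grad (vpot \<tau> (indicator (ball b r))) x =
    (\<chi> i. 1 / (4 * pi) * (LINT y:ball b r|lborel. yukawa_grad \<tau> x y $ i))"
proof -
  have "((\<lambda>x. LINT y:ball b r|lborel. yukawa \<tau> x y) has_derivative
      (\<lambda>h. LINT y:ball b r|lborel. yukawa_grad \<tau> x y \<bullet> h)) (at x)"
  proof (rule has_derivative_set_integral_param[OF compact_cball ball_subset_cball _ open_Compl])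
    show "((\<lambda>x. yukawa \<tau> x y) has_derivative (\<lambda>h. yukawa_grad \<tau> x y \<bullet> h)) (at x)"
      if "x \<in> - cball b r" "y \<in> cball b r" for x y
      using that by (intro has_derivative_yukawa) auto
    show "continuous_on ((- cball b r) \<times> cball b r) (\<lambda>(x, y). yukawa_grad \<tau> x y)"
      unfolding case_prod_beta by (rule continuous_on_yukawa_grad) (auto intro: continuous_intros)
    show "continuous_on (cball b r) (yukawa \<tau> x)" if "x \<in> - cball b r" for x
      using that by (intro continuous_on_yukawa) (auto intro: continuous_intros)
  qed (use assms in auto)
  then have d: "(vpot \<tau> (indicator (ball b r)) has_derivative
      (\<lambda>h. 1 / (4 * pi) * (LINT y:ball b r|lborel. yukawa_grad \<tau> x y \<bullet> h))) (at x)"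
    unfolding vpot_indicator[abs_def] by (rule has_derivative_mult_right)
  then show ?thesis
    unfolding grad_def frechet_derivative_at[OF d, symmetric] by (simp add: inner_axis)
qed

lemma grad_vpot_inner_balls:
  assumes "x \<notin> cball b r" "x \<notin> cball b' r'"
  shows "grad (vpot \<tau> (indicator (ball b r))) x \<bullet> grad (vpot \<tau> (indicator (ball b' r'))) x
      + \<tau>\<^sup>2 * vpot \<tau> (indicator (ball b r)) x * vpot \<tau> (indicator (ball b' r')) x
    = (LINT y:ball b r|lborel. LINT y':ball b' r'|lborel. (1 / (4 * pi))\<^sup>2 * yukawa_energy \<tau> x y y')"
proof -
  define c where "c = 1 / (4 * pi)"
  \<comment> \<open>The energy density is separable of rank four: the index None carries the potentials,
    Some i the i-th gradient components.\<close>
  define u where "u k y = (case k of None \<Rightarrow> c * \<tau>\<^sup>2 * yukawa \<tau> x y | Some i \<Rightarrow> c * yukawa_grad \<tau> x y $ i)"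
    for k :: "3 option" and y
  define v where "v k y = (case k of None \<Rightarrow> c * yukawa \<tau> x y | Some i \<Rightarrow> c * yukawa_grad \<tau> x y $ i)"
    for k :: "3 option" and y
  have sum_option: "(\<Sum>k\<in>UNIV. w k) = w None + (\<Sum>i\<in>UNIV. w (Some i))" for w :: "3 option \<Rightarrow> real"
    by (simp add: UNIV_option_conv sum.reindex)
  have integrable: "set_integrable lborel (ball b r) (u k)" "set_integrable lborel (ball b' r') (v k)" for k
    using assms unfolding u_def v_def
    by (cases k; auto intro!: set_integrable_continuous_on[OF compact_cball _ ball_subset_cball] continuous_intros
        continuous_on_yukawa continuous_on_yukawa_grad)+
  have pointwise: "(\<Sum>k\<in>UNIV. u k y * v k y') = c\<^sup>2 * yukawa_energy \<tau> x y y'" for y y'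
    unfolding sum_option
    by (simp add: u_def v_def yukawa_energy_def inner_vec_def sum_distrib_left power2_eq_square algebra_simps)
  have "grad (vpot \<tau> (indicator (ball b r))) x \<bullet> grad (vpot \<tau> (indicator (ball b' r'))) x
      + \<tau>\<^sup>2 * vpot \<tau> (indicator (ball b r)) x * vpot \<tau> (indicator (ball b' r')) x
    = (\<Sum>k\<in>UNIV. (LINT y:ball b r|lborel. u k y) * (LINT y':ball b' r'|lborel. v k y'))"
    unfolding grad_vpot_indicator_ball[OF assms(1)] grad_vpot_indicator_ball[OF assms(2)]
      vpot_indicator sum_option
    by (simp add: u_def[abs_def] v_def[abs_def] c_def inner_vec_def sum_divide_distrib algebra_simps)
  also have "\<dots> = (LINT y:ball b r|lborel. LINT y':ball b' r'|lborel. \<Sum>k\<in>UNIV. u k y * v k y')"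
    using integrable by (intro nested_set_integral_separable[symmetric])
  also have "\<dots> = (LINT y:ball b r|lborel. LINT y':ball b' r'|lborel. c\<^sup>2 * yukawa_energy \<tau> x y y')"
    by (simp only: pointwise)
  finally show ?thesis unfolding c_def .
qed

lemma Jfun_balls:
  assumes "D \<in> sets lborel" "D \<inter> cball b r = {}" "D \<inter> cball b' r' = {}"
  shows "Jfun \<tau> D (indicator (ball b r)) (indicator (ball b' r'))
    = (LINT x:D|lborel. LINT y:ball b r|lborel. LINT y':ball b' r'|lborel.
        (1 / (4 * pi))\<^sup>2 * yukawa_energy \<tau> x y y')"
  unfolding Jfun_def
proof (intro set_lebesgue_integral_cong[OF assms(1)] allI impI)
  fix x assume "x \<in> D"
  then have "x \<notin> cball b r" "x \<notin> cball b' r'" using assms by blast+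
  then show "grad (vpot \<tau> (indicator (ball b r))) x \<bullet> grad (vpot \<tau> (indicator (ball b' r'))) x
      + \<tau>\<^sup>2 * vpot \<tau> (indicator (ball b r)) x * vpot \<tau> (indicator (ball b' r')) x
    = (LINT y:ball b r|lborel. LINT y':ball b' r'|lborel. (1 / (4 * pi))\<^sup>2 * yukawa_energy \<tau> x y y')"
    by (rule grad_vpot_inner_balls)
qed

section \<open>A uniform lower bound for the energy density\<close>

lemma inner_gt_neg_dist_mult:
  fixes x y y' :: "'a::euclidean_space"
  assumes "x \<notin> closed_segment y y'"
  shows "(x - y) \<bullet> (x - y') > - (dist x y * dist x y')"
proof -
  define u where "u = x - y"
  define v where "v = y' - x"
  have "u \<bullet> v \<noteq> norm u * norm v"
  proof
    assume "u \<bullet> v = norm u * norm v"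
    then have "norm u *\<^sub>R v = norm v *\<^sub>R u" by (simp add: norm_cauchy_schwarz_eq)
    then have "dist y y' = dist y x + dist x y'"
      unfolding dist_triangle_eq u_def v_def by (simp add: norm_minus_commute algebra_simps)
    then have "x \<in> closed_segment y y'" by (simp add: between between_mem_segment[symmetric])
    with assms show False ..
  qed
  then have "u \<bullet> v < norm u * norm v" using norm_cauchy_schwarz[of u v] by linarith
  moreover have "(x - y) \<bullet> (x - y') = - (u \<bullet> v)" "dist x y * dist x y' = norm u * norm v"
    by (simp_all add: u_def v_def dist_norm norm_minus_commute inner_diff_left inner_diff_right inner_commute)
  ultimately show ?thesis by linarith
qed

lemma uniform_angle_bound:
  fixes X Y Y' :: "'a::euclidean_space set"
  assumes compact: "compact X" "compact Y" "compact Y'"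
    and disjoint: "convex hull (Y \<union> Y') \<inter> X = {}"
  obtains \<delta> where "0 < \<delta>" "\<delta> \<le> 1"
    "\<And>x y y'. x \<in> X \<Longrightarrow> y \<in> Y \<Longrightarrow> y' \<in> Y' \<Longrightarrow> (\<delta> - 1) * (dist x y * dist x y') \<le> (x - y) \<bullet> (x - y')"
proof -
  define P where "P = (X \<times> Y) \<times> Y'"
  define cosine where "cosine p = (fst (fst p) - snd (fst p)) \<bullet> (fst (fst p) - snd p)
      / (dist (fst (fst p)) (snd (fst p)) * dist (fst (fst p)) (snd p))" for p :: "('a \<times> 'a) \<times> 'a"
  have segment: "x \<notin> closed_segment y y'" if "((x, y), y') \<in> P" for x y y'
  proof -
    have "closed_segment y y' \<subseteq> convex hull (Y \<union> Y')"
      using that unfolding segment_convex_hull by (intro hull_mono) (auto simp: P_def)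
    then show ?thesis using disjoint that by (auto simp: P_def)
  qed
  have dist_pos: "dist x y * dist x y' > 0" if "((x, y), y') \<in> P" for x y y'
    using segment[OF that] by (metis ends_in_segment mult_pos_pos zero_less_dist_iff)
  have cosine_gt: "cosine p > -1" if "p \<in> P" for p
  proof -
    obtain x y y' where p: "p = ((x, y), y')" by (metis prod.collapse)
    show ?thesis
      using inner_gt_neg_dist_mult[OF segment] dist_pos that
      by (simp add: p cosine_def pos_less_divide_eq)
  qed
  have le_cosine: "\<delta> - 1 \<le> cosine ((x, y), y') \<Longrightarrow> (\<delta> - 1) * (dist x y * dist x y') \<le> (x - y) \<bullet> (x - y')"
    if "((x, y), y') \<in> P" for \<delta> x y y'
    using dist_pos[OF that] by (simp add: cosine_def pos_le_divide_eq)
  show thesis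
  proof (cases "P = {}")
    case True
    then show thesis by (intro that[of 1]) (auto simp: P_def)
  next
    case False
    have "dist (fst (fst q)) (snd (fst q)) * dist (fst (fst q)) (snd q) \<noteq> 0" if "q \<in> P" for q
      using dist_pos[of "fst (fst q)" "snd (fst q)" "snd q"] that by (simp only: prod.collapse True_implies_equals)
    then have "continuous_on P cosine"
      unfolding cosine_def by (intro continuous_intros) blast
    then obtain p where "p \<in> P" and p: "\<And>q. q \<in> P \<Longrightarrow> cosine p \<le> cosine q"
      using continuous_attains_inf[OF compact_Times[OF compact_Times[OF compact(1,2)] compact(3)]]
        False unfolding P_def by blast
    show thesis
    proof (rule that[of "min (cosine p + 1) 1"])
      show "0 < min (cosine p + 1) 1" using cosine_gt[OF \<open>p \<in> P\<close>] by simp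
      fix x y y' assume "x \<in> X" "y \<in> Y" "y' \<in> Y'"
      then have "((x, y), y') \<in> P" by (simp add: P_def)
      with p show "(min (cosine p + 1) 1 - 1) * (dist x y * dist x y') \<le> (x - y) \<bullet> (x - y')"
        by (intro le_cosine) force+
    qed simp
  qed
qed

lemma yukawa_energy_eq:
  fixes x y y' :: "'a::real_inner"
  assumes "x \<noteq> y" "x \<noteq> y'"
  shows "yukawa_energy \<tau> x y y' = exp (- \<tau> * (dist x y + dist x y')) / (dist x y * dist x y') *
    ((\<tau> + 1 / dist x y) * (\<tau> + 1 / dist x y') * ((x - y) \<bullet> (x - y') / (dist x y * dist x y')) + \<tau>\<^sup>2)"
proof -
  define u where "u = dist x y"
  define u' where "u' = dist x y'"
  have "u > 0" "u' > 0" using assms by (simp_all add: u_def u'_def)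
  have "exp (- \<tau> * (u + u')) = exp (- \<tau> * u) * exp (- \<tau> * u')"
    by (simp add: mult_exp_exp algebra_simps)
  with \<open>u > 0\<close> \<open>u' > 0\<close> show ?thesis
    unfolding yukawa_energy_def yukawa_grad_def yukawa_def inner_scaleR_left inner_scaleR_right
    by (simp add: u_def[symmetric] u'_def[symmetric] power3_eq_cube power2_eq_square field_simps)
qed

lemma perturbed_cosine_bound:
  fixes a a' \<tau> c \<delta> :: real
  assumes \<delta>: "0 < \<delta>" "\<delta> \<le> 1" and "\<tau> > 0"
    and a: "\<tau> \<le> a" "a \<le> \<tau> * (1 + \<delta> / 4)" and a': "\<tau> \<le> a'" "a' \<le> \<tau> * (1 + \<delta> / 4)"
    and c: "\<delta> - 1 \<le> c"
  shows "\<delta> / 4 * \<tau>\<^sup>2 \<le> a * a' * c + \<tau>\<^sup>2"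
proof (cases "c \<ge> 0")
  case True
  then have "a * a' * c \<ge> 0" using a a' \<open>\<tau> > 0\<close> by simp
  moreover have "\<delta> / 4 * \<tau>\<^sup>2 \<le> 1 * \<tau>\<^sup>2" using \<delta> by (intro mult_right_mono) auto
  ultimately show ?thesis by linarith
next
  case False
  have "a * a' \<le> (\<tau> * (1 + \<delta> / 4))\<^sup>2"
    unfolding power2_eq_square using a a' \<open>\<tau> > 0\<close> by (intro mult_mono) auto
  then have "(\<tau> * (1 + \<delta> / 4))\<^sup>2 * c \<le> a * a' * c"
    using False by (simp add: mult_right_mono_neg)
  moreover have "(\<tau> * (1 + \<delta> / 4))\<^sup>2 * (\<delta> - 1) \<le> (\<tau> * (1 + \<delta> / 4))\<^sup>2 * c"
    using c by (intro mult_left_mono) auto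
  moreover have "(1 + \<delta> / 4)\<^sup>2 * (1 - \<delta>) \<le> 1 - \<delta> / 4"
  proof -
    have "(1 + \<delta> / 4)\<^sup>2 \<le> 1 + 3 * \<delta> / 4" using \<delta> by (simp add: power2_eq_square field_simps)
    then have "(1 + \<delta> / 4)\<^sup>2 * (1 - \<delta>) \<le> (1 + 3 * \<delta> / 4) * (1 - \<delta>)"
      using \<delta> by (intro mult_right_mono) auto
    also have "\<dots> \<le> 1 - \<delta> / 4" using \<delta> by (simp add: algebra_simps)
    finally show ?thesis .
  qed
  then have "\<tau>\<^sup>2 * ((1 + \<delta> / 4)\<^sup>2 * (1 - \<delta>)) \<le> \<tau>\<^sup>2 * (1 - \<delta> / 4)"
    by (intro mult_left_mono) auto
  moreover have "(\<tau> * (1 + \<delta> / 4))\<^sup>2 * (\<delta> - 1) = - (\<tau>\<^sup>2 * ((1 + \<delta> / 4)\<^sup>2 * (1 - \<delta>)))"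
    by (simp only: power_mult_distrib) (simp add: algebra_simps)
  moreover have "\<tau>\<^sup>2 * (1 - \<delta> / 4) = \<tau>\<^sup>2 - \<delta> / 4 * \<tau>\<^sup>2" by (simp add: algebra_simps)
  ultimately show ?thesis by linarith
qed

lemma yukawa_energy_lower_bound:
  fixes x y y' :: "'a::real_inner"
  assumes "0 < d0" and y: "d0 \<le> dist x y" "dist x y \<le> R" and y': "d0 \<le> dist x y'" "dist x y' \<le> R"
    and angle: "(\<delta> - 1) * (dist x y * dist x y') \<le> (x - y) \<bullet> (x - y')"
    and \<delta>: "0 < \<delta>" "\<delta> \<le> 1" and \<tau>: "4 / (\<delta> * d0) \<le> \<tau>"
  shows "\<delta> / 4 / R\<^sup>2 * \<tau>\<^sup>2 * exp (- \<tau> * (dist x y + dist x y')) \<le> yukawa_energy \<tau> x y y'"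
proof -
  define u where "u = dist x y"
  define u' where "u' = dist x y'"
  define E where "E = exp (- \<tau> * (u + u'))"
  have u: "0 < u" "u \<le> R" "0 < u'" "u' \<le> R" unfolding u_def u'_def using assms by linarith+
  have "\<tau> > 0" using \<tau> \<delta> \<open>0 < d0\<close> by (smt (verit) divide_pos_pos mult_pos_pos)
  have small: "1 / d0 \<le> \<tau> * (\<delta> / 4)"
    using \<tau> \<delta> \<open>0 < d0\<close> by (simp add: field_simps)
  have "1 / u \<le> 1 / d0" "1 / u' \<le> 1 / d0"
    using y y' \<open>0 < d0\<close> by (simp_all add: u_def u'_def frac_le)
  then have a: "\<tau> \<le> \<tau> + 1 / u" "\<tau> + 1 / u \<le> \<tau> * (1 + \<delta> / 4)"
    and a': "\<tau> \<le> \<tau> + 1 / u'" "\<tau> + 1 / u' \<le> \<tau> * (1 + \<delta> / 4)"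
    using u small by (simp_all add: algebra_simps)
  have "\<delta> - 1 \<le> (x - y) \<bullet> (x - y') / (u * u')"
    using angle u by (simp add: u_def u'_def pos_le_divide_eq)
  then have "\<delta> / 4 * \<tau>\<^sup>2 \<le> (\<tau> + 1 / u) * (\<tau> + 1 / u') * ((x - y) \<bullet> (x - y') / (u * u')) + \<tau>\<^sup>2"
    by (rule perturbed_cosine_bound[OF \<delta> \<open>\<tau> > 0\<close> a a'])
  moreover have "E / R\<^sup>2 \<le> E / (u * u')"
    using u by (intro divide_left_mono) (auto simp: E_def power2_eq_square intro: mult_mono)
  ultimately have "E / R\<^sup>2 * (\<delta> / 4 * \<tau>\<^sup>2)
      \<le> E / (u * u') * ((\<tau> + 1 / u) * (\<tau> + 1 / u') * ((x - y) \<bullet> (x - y') / (u * u')) + \<tau>\<^sup>2)"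
    using u \<delta> by (intro mult_mono) (auto simp: E_def)
  moreover have "x \<noteq> y" "x \<noteq> y'" using u by (auto simp: u_def u'_def)
  then have "yukawa_energy \<tau> x y y'
      = E / (u * u') * ((\<tau> + 1 / u) * (\<tau> + 1 / u') * ((x - y) \<bullet> (x - y') / (u * u')) + \<tau>\<^sup>2)"
    unfolding E_def u_def u'_def by (rule yukawa_energy_eq)
  moreover have "\<delta> / 4 / R\<^sup>2 * \<tau>\<^sup>2 * exp (- \<tau> * (dist x y + dist x y')) = E / R\<^sup>2 * (\<delta> / 4 * \<tau>\<^sup>2)"
    by (simp add: E_def u_def u'_def mult_ac)
  ultimately show ?thesis by simp
qed

lemma Jfun_balls_lower_bound:
  fixes D :: "(real^3) set"
  assumes D: "open D" "bounded D" and "0 < d0" and \<delta>: "0 < \<delta>" "\<delta> \<le> 1"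
    and far: "\<And>x y. x \<in> closure D \<Longrightarrow> y \<in> cball b r \<union> cball b' r' \<Longrightarrow> d0 \<le> dist x y \<and> dist x y \<le> R"
    and angle: "\<And>x y y'. x \<in> closure D \<Longrightarrow> y \<in> cball b r \<Longrightarrow> y' \<in> cball b' r' \<Longrightarrow>
      (\<delta> - 1) * (dist x y * dist x y') \<le> (x - y) \<bullet> (x - y')"
    and \<tau>: "4 / (\<delta> * d0) \<le> \<tau>"
  shows "(1 / (4 * pi))\<^sup>2 * (\<delta> / 4 / R\<^sup>2) * \<tau>\<^sup>2 *
      (LINT x:D|lborel. LINT y:ball b r|lborel. LINT y':ball b' r'|lborel. exp (- \<tau> * phi x y y'))
    \<le> Jfun \<tau> D (indicator (ball b r)) (indicator (ball b' r'))"
proof -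
  define c where "c = (1 / (4 * pi))\<^sup>2"
  define P where "P = (closure D \<times> cball b r) \<times> cball b' r'"
  have closure: "compact (closure D)" "D \<subseteq> closure D" "D \<in> sets lborel"
    using D by (auto simp: compact_closure closure_subset)
  have disjoint: "D \<inter> cball b r = {}" "D \<inter> cball b' r' = {}"
  proof -
    have "x \<notin> cball b r \<union> cball b' r'" if "x \<in> D" for x
      using far[of x x] that closure(2) \<open>0 < d0\<close> by auto
    then show "D \<inter> cball b r = {}" "D \<inter> cball b' r' = {}" by auto
  qed
  have distinct: "fst (fst p) \<noteq> snd (fst p)" "fst (fst p) \<noteq> snd p" if "p \<in> P" for p
    using far[of "fst (fst p)" "snd (fst p)"] far[of "fst (fst p)" "snd p"] that \<open>0 < d0\<close>
    by (auto simp: P_def)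
  have energy: "continuous_on P (\<lambda>((x, y), y'). c * yukawa_energy \<tau> x y y')"
    unfolding case_prod_beta using distinct by (intro continuous_intros continuous_on_yukawa_energy) auto
  have kernel: "continuous_on P (\<lambda>((x, y), y'). c * (\<delta> / 4 / R\<^sup>2) * \<tau>\<^sup>2 * exp (- \<tau> * phi x y y'))"
    unfolding case_prod_beta phi_def by (intro continuous_intros)
  have "c * (\<delta> / 4 / R\<^sup>2) * \<tau>\<^sup>2 * exp (- \<tau> * phi x y y') \<le> c * yukawa_energy \<tau> x y y'"
    if "x \<in> D" "y \<in> ball b r" "y' \<in> ball b' r'" for x y y'
  proof -
    have "\<delta> / 4 / R\<^sup>2 * \<tau>\<^sup>2 * exp (- \<tau> * (dist x y + dist x y')) \<le> yukawa_energy \<tau> x y y'"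
      using far[of x y] far[of x y'] angle[of x y y'] that closure(2) \<tau>
      by (intro yukawa_energy_lower_bound[OF \<open>0 < d0\<close> _ _ _ _ _ \<delta>]) auto
    then have "c * (\<delta> / 4 / R\<^sup>2 * \<tau>\<^sup>2 * exp (- \<tau> * (dist x y + dist x y'))) \<le> c * yukawa_energy \<tau> x y y'"
      by (rule mult_left_mono) (simp add: c_def)
    then show ?thesis by (simp add: phi_def dist_commute mult_ac)
  qed
  then have "(LINT x:D|lborel. LINT y:ball b r|lborel. LINT y':ball b' r'|lborel.
        c * (\<delta> / 4 / R\<^sup>2) * \<tau>\<^sup>2 * exp (- \<tau> * phi x y y'))
      \<le> Jfun \<tau> D (indicator (ball b r)) (indicator (ball b' r'))"
    unfolding Jfun_balls[OF closure(3) disjoint] c_def[symmetric] using closure kernel energy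
    by (intro nested_set_integral_mono[OF closure(1) compact_cball compact_cball]) (auto simp: P_def)
  then show ?thesis by (simp add: c_def)
qed

lemma set_integral_exp_phi_pos:
  fixes D :: "(real^3) set"
  assumes "open D" "bounded D" "D \<noteq> {}" "r > 0" "r' > 0"
  shows "(LINT x:D|lborel. LINT y:ball b r|lborel. LINT y':ball b' r'|lborel. exp (- \<tau> * phi x y y')) > 0"
proof (rule nested_set_integral_pos[OF _ compact_cball compact_cball])
  show "compact (closure D)" using assms(2) by (simp add: compact_closure)
  show "continuous_on ((closure D \<times> cball b r) \<times> cball b' r') (\<lambda>((x, y), y'). exp (- \<tau> * phi x y y'))"
    unfolding case_prod_beta phi_def by (intro continuous_intros)
qed (use assms closure_subset in auto)

theorem lemma4p1:
  fixes D :: "(real^3) set" and b b' :: "real^3" and r r' :: real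
  assumes "open D" and "bounded D" and "D \<noteq> {}"
    and "r > 0" and "r' > 0"
    and "convex hull (closure (ball b r) \<union> closure (ball b' r')) \<inter> closure D = {}"
  shows "\<exists>C \<tau>0. C > 0 \<and> \<tau>0 > 0 \<and> (\<forall>\<tau>\<ge>\<tau>0.
           Jfun \<tau> D (indicator (ball b r)) (indicator (ball b' r')) > 0 \<and>
           Jfun \<tau> D (indicator (ball b r)) (indicator (ball b' r'))
             \<ge> C * \<tau>\<^sup>2 * (LINT x:D|lborel. (LINT y:ball b r|lborel. (LINT y':ball b' r'|lborel.
                   exp (- \<tau> * phi x y y')))))"
proof -
  define B where "B = cball b r \<union> cball b' r'"
  have hull: "convex hull B \<inter> closure D = {}" using assms(4-6) by (simp add: B_def)
  have compact: "compact (closure D)" "compact B" using assms(2) by (auto simp: compact_closure B_def)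
  obtain \<delta> where \<delta>: "0 < \<delta>" "\<delta> \<le> 1" and angle: "\<And>x y y'. x \<in> closure D \<Longrightarrow> y \<in> cball b r \<Longrightarrow>
      y' \<in> cball b' r' \<Longrightarrow> (\<delta> - 1) * (dist x y * dist x y') \<le> (x - y) \<bullet> (x - y')"
    using hull unfolding B_def by (rule uniform_angle_bound[OF compact(1) compact_cball compact_cball]) blast
  have "closure D \<inter> B = {}" using hull hull_subset[of B convex] by auto
  then obtain d0 where "0 < d0" and d0: "\<forall>x\<in>closure D. \<forall>y\<in>B. d0 \<le> dist x y"
    using separate_compact_closed[OF compact(1) compact_imp_closed[OF compact(2)]] by blast
  have "bounded (closure D \<union> B)" using compact by (simp add: compact_imp_bounded)
  then obtain R where R: "\<forall>x\<in>closure D \<union> B. \<forall>y\<in>closure D \<union> B. dist x y \<le> R"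
    unfolding bounded_two_points by blast
  have "0 < R"
  proof -
    obtain x where "x \<in> D" using assms(3) by blast
    then have "x \<in> closure D" "b \<in> B" using closure_subset assms(4) by (auto simp: B_def)
    then have "d0 \<le> dist x b" "dist x b \<le> R" using d0 R by auto
    with \<open>0 < d0\<close> show ?thesis by linarith
  qed
  define C where "C = (1 / (4 * pi))\<^sup>2 * (\<delta> / 4 / R\<^sup>2)"
  show ?thesis
  proof (rule exI[of _ C], rule exI[of _ "4 / (\<delta> * d0)"], intro conjI allI impI)
    show "C > 0" "4 / (\<delta> * d0) > 0" using \<delta> \<open>0 < d0\<close> \<open>0 < R\<close> by (simp_all add: C_def)
    fix \<tau> assume \<tau>: "4 / (\<delta> * d0) \<le> \<tau>"
    then have "\<tau> > 0" using \<open>4 / (\<delta> * d0) > 0\<close> by linarith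
    show "C * \<tau>\<^sup>2 * (LINT x:D|lborel. LINT y:ball b r|lborel. LINT y':ball b' r'|lborel.
        exp (- \<tau> * phi x y y')) \<le> Jfun \<tau> D (indicator (ball b r)) (indicator (ball b' r'))"
      unfolding C_def using d0 R \<tau>
      by (intro Jfun_balls_lower_bound[OF assms(1,2) \<open>0 < d0\<close> \<delta> _ angle]) (auto simp: B_def)
    moreover have "C * \<tau>\<^sup>2 * (LINT x:D|lborel. LINT y:ball b r|lborel. LINT y':ball b' r'|lborel.
        exp (- \<tau> * phi x y y')) > 0"
      using set_integral_exp_phi_pos[OF assms(1-5)] \<open>C > 0\<close> \<open>\<tau> > 0\<close> by simp
    ultimately show "Jfun \<tau> D (indicator (ball b r)) (indicator (ball b' r')) > 0" by linarith
  qed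
qed

end
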